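(* Let $q=2^m$ and let $\mathbf{H}$ be a binary $r\times N$ matrix in which every column contains exactly two entries equal to $1$, with Tanner graph $\mathcal{G}$. For every check node $i$ choose a nonzero $a_i\in\mathbb{F}_q$, and for every edge $(i,j)$ of $\mathcal{G}$ (check $i$, variable $j$) choose a nonzero $b_{ij}\in\mathbb{F}_q$. For each variable node $j$, with $i$ and $k$ the two check nodes adjacent to $j$, define the labels $x_{ij}=a_i b_{ij}b_{kj}$ and $x_{kj}=a_k b_{kj}b_{ij}$. Then for every cycle $\mathcal{C}$ of $\mathcal{G}$, the product $\Pi(\mathcal{C})$ of the labels over $\mathcal{C}$ equals $1$.
   Context: The Tanner graph of an $r\times N$ matrix $(H_{ij})$ is the bipartite graph with variable nodes indexed by columns, check nodes indexed by rows, and an edge between check $i$ and variable $j$ iff $H_{ij}\neq0$; here each edge $(i,j)$ carries the label $x_{ij}\in\mathbb{F}_q\setminus\{0\}$. For a cycle $\mathcal{C}=v_1,c_1,v_2,c_2,\dots,v_k,c_k,v_1$ (alternating variable nodes $v_t$ and check nodes $c_t$), the product over the cycle is $\Pi(\mathcal{C})=\prod_{t=1}^{k} x_{c_t v_{t+1}}\,x_{c_t v_t}^{-1}$ (indices of $v$ mod $k$), i.e. each label is raised to the power $1$ for check-to-variable edges and $-1$ for variable-to-check edges along the traversal. *)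

theory Defs
  imports Main
begin

definition binary_matrix :: "(nat \<Rightarrow> nat \<Rightarrow> nat) \<Rightarrow> nat \<Rightarrow> nat \<Rightarrow> bool" where
  "binary_matrix H r N \<longleftrightarrow> (\<forall>i<r. \<forall>j<N. H i j \<in> {0, 1})"

definition tanner_edge :: "(nat \<Rightarrow> nat \<Rightarrow> nat) \<Rightarrow> nat \<Rightarrow> nat \<Rightarrow> nat \<Rightarrow> nat \<Rightarrow> bool" where
  "tanner_edge H r N i j \<longleftrightarrow> i < r \<and> j < N \<and> H i j \<noteq> 0"

definition tanner_cycle :: "(nat \<Rightarrow> nat \<Rightarrow> nat) \<Rightarrow> nat \<Rightarrow> nat \<Rightarrow> nat \<Rightarrow> (nat \<Rightarrow> nat) \<Rightarrow> (nat \<Rightarrow> nat) \<Rightarrow> bool" where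
  "tanner_cycle H r N k v c \<longleftrightarrow>
     k \<ge> 2 \<and> inj_on v {..<k} \<and> inj_on c {..<k} \<and>
     (\<forall>t<k. tanner_edge H r N (c t) (v t) \<and> tanner_edge H r N (c t) (v ((t + 1) mod k)))"

text \<open>Product of the labels over a cycle: each check-to-variable edge (c_t, v_{t+1})
  contributes x, each variable-to-check edge (v_t, c_t) contributes x^{-1}.\<close>

definition cycle_product :: "(nat \<Rightarrow> nat \<Rightarrow> 'a::field) \<Rightarrow> nat \<Rightarrow> (nat \<Rightarrow> nat) \<Rightarrow> (nat \<Rightarrow> nat) \<Rightarrow> 'a" where
  "cycle_product x k v c = (\<Prod>t<k. x (c t) (v ((t + 1) mod k)) * inverse (x (c t) (v t)))"

end

theory Submission
  imports Defs
begin

text \<open>Along a cycle, the variable node v_(t+1) is reached from the check c_t and left towards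
  c_(t+1); both labels at v_(t+1) factor as a_c times the common weight b_(c_t v) b_(c_(t+1) v).
  Hence the numerator and the denominator of the cycle product are the same product of the a's
  and the weights, up to a cyclic shift of the index, and they cancel.\<close>

lemma prod_lessThan_rotate:
  fixes f :: "nat \<Rightarrow> 'a::comm_monoid_mult"
  assumes "k > 0"
  shows "(\<Prod>t<k. f ((t + 1) mod k)) = (\<Prod>t<k. f t)"
proof -
  obtain n where k: "k = Suc n" using assms by (cases k) auto
  have "(\<Prod>t<Suc n. f ((t + 1) mod Suc n)) = (\<Prod>t<n. f ((t + 1) mod Suc n)) * f 0"
    by (simp add: prod.lessThan_Suc)
  also have "(\<Prod>t<n. f ((t + 1) mod Suc n)) = (\<Prod>t<n. f (Suc t))"
    by (rule prod.cong) auto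
  also have "(\<Prod>t<n. f (Suc t)) * f 0 = (\<Prod>t<Suc n. f t)"
    using prod.lessThan_Suc_shift[of f n] by (simp only: mult.commute)
  finally show ?thesis using k by simp
qed

lemma cycle_product_eq_divide:
  "cycle_product x k v c = (\<Prod>t<k. x (c t) (v ((t + 1) mod k))) / (\<Prod>t<k. x (c t) (v t))"
  unfolding cycle_product_def divide_inverse[symmetric] by (rule prod_dividef)

lemma tanner_cycle_consecutive_checks_neq:
  assumes cyc: "tanner_cycle H r N k v c" and t: "t < k"
  shows "c t \<noteq> c ((t + 1) mod k)"
proof
  assume eq: "c t = c ((t + 1) mod k)"
  from cyc have "k \<ge> 2" and "inj_on c {..<k}" by (simp_all add: tanner_cycle_def)
  with eq t have "t = (t + 1) mod k" by (auto dest: inj_onD)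
  moreover have "(t + 1) mod k \<noteq> t"
  proof (cases "t + 1 = k")
    case True
    with \<open>k \<ge> 2\<close> show ?thesis by simp
  next
    case False
    with t show ?thesis by simp
  qed
  ultimately show False by simp
qed

lemma cycle_product_eq_1_if_labels_factor:
  fixes x :: "nat \<Rightarrow> nat \<Rightarrow> 'a::field"
  assumes k: "k > 0"
    and out: "\<And>t. t < k \<Longrightarrow> x (c t) (v ((t + 1) mod k)) = \<alpha> t * w t"
    and into: "\<And>t. t < k \<Longrightarrow> x (c ((t + 1) mod k)) (v ((t + 1) mod k)) = \<alpha> ((t + 1) mod k) * w t"
    and nz: "\<And>t. t < k \<Longrightarrow> \<alpha> t \<noteq> 0 \<and> w t \<noteq> 0"
  shows "cycle_product x k v c = 1"
proof -
  define s where "s t = (t + 1) mod k" for t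
  have "(\<Prod>t<k. x (c t) (v t)) = (\<Prod>t<k. x (c (s t)) (v (s t)))"
    unfolding s_def by (rule prod_lessThan_rotate[OF k, symmetric])
  also have "\<dots> = (\<Prod>t<k. \<alpha> (s t) * w t)"
    by (rule prod.cong) (simp_all add: into[folded s_def])
  also have "\<dots> = (\<Prod>t<k. \<alpha> t * w t)"
    unfolding prod.distrib prod_lessThan_rotate[OF k, of \<alpha>, folded s_def] ..
  finally have denominator: "(\<Prod>t<k. x (c t) (v t)) = (\<Prod>t<k. \<alpha> t * w t)" .
  have numerator: "(\<Prod>t<k. x (c t) (v ((t + 1) mod k))) = (\<Prod>t<k. \<alpha> t * w t)"
    by (rule prod.cong[OF refl], rule out) simp
  have "(\<Prod>t<k. \<alpha> t * w t) \<noteq> 0"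
    using nz by simp
  then show ?thesis
    unfolding cycle_product_eq_divide numerator denominator by simp
qed

theorem mainTheorem3:
  fixes H :: "nat \<Rightarrow> nat \<Rightarrow> nat" and r N m :: nat
    and a :: "nat \<Rightarrow> 'a::{field, finite}" and b x :: "nat \<Rightarrow> nat \<Rightarrow> 'a"
  assumes q: "card (UNIV :: 'a set) = 2 ^ m"
    and bin: "binary_matrix H r N"
    and colw: "\<forall>j<N. card {i. i < r \<and> H i j = 1} = 2"
    and a_nz: "\<forall>i<r. a i \<noteq> 0"
    and b_nz: "\<forall>i j. tanner_edge H r N i j \<longrightarrow> b i j \<noteq> 0"
    and lab: "\<forall>j<N. \<forall>i k. tanner_edge H r N i j \<and> tanner_edge H r N k j \<and> i \<noteq> k
                 \<longrightarrow> x i j = a i * b i j * b k j"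
  shows "\<forall>k v c. tanner_cycle H r N k v c \<longrightarrow> cycle_product x k v c = 1"
proof (intro allI impI)
  fix k v c assume cyc: "tanner_cycle H r N k v c"
  define s where "s t = (t + 1) mod k" for t
  have edges: "tanner_edge H r N (c t) (v t)" "tanner_edge H r N (c t) (v (s t))"
    "tanner_edge H r N (c (s t)) (v (s t))" if "t < k" for t
    using cyc that by (auto simp: tanner_cycle_def s_def)
  have neq: "c t \<noteq> c (s t)" if "t < k" for t
    using tanner_cycle_consecutive_checks_neq[OF cyc that] by (simp add: s_def)
  have "k > 0"
    using cyc by (simp add: tanner_cycle_def)
  moreover have "x (c t) (v (s t)) = a (c t) * (b (c t) (v (s t)) * b (c (s t)) (v (s t)))"
    and "x (c (s t)) (v (s t)) = a (c (s t)) * (b (c t) (v (s t)) * b (c (s t)) (v (s t)))"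
    if "t < k" for t
    using edges[OF that] neq[OF that] lab[rule_format, of "v (s t)" "c t" "c (s t)"]
      lab[rule_format, of "v (s t)" "c (s t)" "c t"]
    by (auto simp: tanner_edge_def ac_simps)
  moreover have "a (c t) \<noteq> 0 \<and> b (c t) (v (s t)) * b (c (s t)) (v (s t)) \<noteq> 0" if "t < k" for t
    using edges[OF that] a_nz b_nz by (simp add: tanner_edge_def)
  ultimately show "cycle_product x k v c = 1"
    unfolding s_def by (rule cycle_product_eq_1_if_labels_factor)
qed

end
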